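(* For every $d\in\mathbb{N}$, $\mathcal{NN}_{\mathrm{LReLU}}(d,d,d)$ compactly approximates $\mathcal{S}^\infty_c(\mathbb{R}^d)$: for every $\tau\in\mathcal{S}^\infty_c(\mathbb{R}^d)$, every compact $K\subset\mathbb{R}^d$ and every $\epsilon>0$ there exists $g\in\mathcal{NN}_{\mathrm{LReLU}}(d,d,d)$ with $\sup_{x\in K}\|\tau(x)-g(x)\|_\infty<\epsilon$.
   Context: For $\beta\in\mathbb{R}$, $\mathrm{LReLU}_\beta(x)=x$ if $x\ge 0$ and $\beta x$ if $x<0$, applied componentwise to vectors. $\mathcal{NN}_{\mathrm{LReLU}}(d,d,d)$ is the set of all maps $W_{N+1}\circ\mathrm{LReLU}_{\beta_N}\circ W_N\circ\cdots\circ\mathrm{LReLU}_{\beta_1}\circ W_1:\mathbb{R}^d\to\mathbb{R}^d$ with $N\in\mathbb{N}_0$, $\beta_i\in\mathbb{R}$, integers $1\le d_1,\dots,d_N\le d$, $d_0=d_{N+1}=d$, and $W_i:\mathbb{R}^{d_{i-1}}\to\mathbb{R}^{d_i}$ affine. A diffeomorphism $f:\mathbb{R}^d\to\mathbb{R}^d$ is compactly supported if there is a compact $K$ with $f(x)=x$ for all $x\notin K$. $\mathcal{S}^\infty_c(\mathbb{R}^d)$ is the set of compactly supported $C^\infty$-diffeomorphisms $\tau$ of $\mathbb{R}^d$ of the form $\tau(x)=(x_1,\dots,x_{d-1},\tau_d(x))$ for some continuous $\tau_d:\mathbb{R}^d\to\mathbb{R}$. *)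

theory Defs
  imports "HOL-Analysis.Analysis"
begin

definition lrelu :: "real \<Rightarrow> real \<Rightarrow> real" where
  "lrelu \<beta> t = (if t \<ge> 0 then t else \<beta> * t)"

text \<open>Hidden states of width m are vectors in R^m, represented as functions
  nat => real whose coordinates 0..m-1 are the entries (coordinates >= m are 0).
  The input and output space R^d is real^'n with d = CARD('n).\<close>

text \<open>layered d m f: f : R^d -> R^m is of the form
  LReLU_{beta_k} o W_k o ... o LReLU_{beta_1} o W_1 with k >= 1,
  all widths between 1 and d = CARD('n).\<close>
inductive layered :: "nat \<Rightarrow> (real^'n \<Rightarrow> (nat \<Rightarrow> real)) \<Rightarrow> bool" where
  first: "1 \<le> m \<Longrightarrow> m \<le> CARD('n) \<Longrightarrow>
    layered m (\<lambda>x::real^'n. \<lambda>i. if i < m then lrelu \<beta> (b i + (\<Sum>j\<in>UNIV. A i j * x $ j)) else 0)"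
| step: "layered m f \<Longrightarrow> 1 \<le> n \<Longrightarrow> n \<le> CARD('n) \<Longrightarrow>
    layered n (\<lambda>x::real^'n. \<lambda>i. if i < n then lrelu \<beta> (b i + (\<Sum>j<m. A i j * f x j)) else 0)"

definition NN_LReLU :: "(real^'n \<Rightarrow> real^'n) set" where
  "NN_LReLU =
     {g. \<exists>(A::'n \<Rightarrow> 'n \<Rightarrow> real) (b::'n \<Rightarrow> real).
            g = (\<lambda>x. \<chi> i. b i + (\<Sum>j\<in>UNIV. A i j * x $ j))}
   \<union> {g. \<exists>m f (B::'n \<Rightarrow> nat \<Rightarrow> real) (c::'n \<Rightarrow> real). layered m f \<and>
            g = (\<lambda>x. \<chi> i. c i + (\<Sum>j<m. B i j * f x j))}"

text \<open>C^infinity real-valued functions: differentiable everywhere, and all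
  partial derivatives again C^infinity (greatest fixed point = all orders).\<close>
coinductive smooth_real :: "('a::euclidean_space \<Rightarrow> real) \<Rightarrow> bool" where
  "(\<forall>x. g differentiable (at x)) \<Longrightarrow>
   (\<forall>i\<in>Basis. smooth_real (\<lambda>x. frechet_derivative g (at x) i)) \<Longrightarrow> smooth_real g"

definition smooth :: "('a::euclidean_space \<Rightarrow> 'b::euclidean_space) \<Rightarrow> bool" where
  "smooth f \<longleftrightarrow> (\<forall>b\<in>Basis. smooth_real (\<lambda>x. f x \<bullet> b))"

definition smooth_diffeo :: "('a::euclidean_space \<Rightarrow> 'a) \<Rightarrow> bool" where
  "smooth_diffeo f \<longleftrightarrow> bij f \<and> smooth f \<and> smooth (inv f)"

definition compactly_supported :: "('a::euclidean_space \<Rightarrow> 'a) \<Rightarrow> bool" where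
  "compactly_supported f \<longleftrightarrow> (\<exists>K. compact K \<and> (\<forall>x. x \<notin> K \<longrightarrow> f x = x))"

text \<open>S^infinity_c(R^d): the last coordinate is the greatest index of 'n.\<close>
definition S_inf_c :: "(real^'n::{finite,linorder} \<Rightarrow> real^'n::{finite,linorder}) set" where
  "S_inf_c = {\<tau>. smooth_diffeo \<tau> \<and> compactly_supported \<tau> \<and>
     (\<exists>\<tau>d::real^'n::{finite,linorder} \<Rightarrow> real. continuous_on UNIV \<tau>d \<and>
        (\<forall>x. \<tau> x = (\<chi> i. if i = Max (UNIV::'n::{finite,linorder} set) then \<tau>d x else x $ i)))}"

end

theory Submission
  imports Defs
begin

text \<open>A map \<open>\<tau>\<close> in \<open>S_inf_c\<close> only changes the last coordinate \<open>l\<close>, by a continuous function \<open>f\<close>;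
  since \<open>\<tau>\<close> is injective and the identity outside a compact set, \<open>f\<close> is increasing in \<open>x$l\<close>.
  Networks realize, on compact sets, every shear \<open>x \<mapsto> x + h x \<cdot> e\<^sub>l\<close> whose height \<open>h\<close> ignores
  \<open>x$l\<close> and is a sum of ReLUs of affine functions; through exponentials and Stone--Weierstrass
  these heights approximate every continuous function of the other coordinates. The increasing
  update \<open>x$l \<mapsto> f x\<close> is then approximated by a staircase: on a grid in \<open>x$l\<close>, each step is a soft
  step made of two leaky-ReLU layers and a shear, of height approximating the increment of \<open>f\<close>
  over one grid cell.\<close>

lemma NN_LReLU_affineI:
  "g = (\<lambda>x. \<chi> i. b i + (\<Sum>j\<in>UNIV. A i j * x $ j)) \<Longrightarrow> g \<in> NN_LReLU"
  unfolding NN_LReLU_def by blast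

lemma NN_LReLU_layeredI:
  "layered m f \<Longrightarrow> g = (\<lambda>x. \<chi> i. c i + (\<Sum>j<m. B i j * f x j)) \<Longrightarrow> g \<in> NN_LReLU"
  unfolding NN_LReLU_def by blast

lemma NN_LReLU_cases:
  assumes "g \<in> NN_LReLU"
  obtains A b where "g = (\<lambda>x. \<chi> i. b i + (\<Sum>j\<in>UNIV. A i j * x $ j))"
  | m f B c where "layered m f" "g = (\<lambda>x. \<chi> i. c i + (\<Sum>j<m. B i j * f x j))"
  using assms unfolding NN_LReLU_def by blast

lemma sum_mult_affine:
  fixes A :: "'a \<Rightarrow> 'b \<Rightarrow> real"
  assumes "finite J" "finite I"
  shows "(\<Sum>j\<in>J. A i j * (c j + (\<Sum>k\<in>I. B j k * y k)))
     = (\<Sum>j\<in>J. A i j * c j) + (\<Sum>k\<in>I. (\<Sum>j\<in>J. A i j * B j k) * y k)"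
proof -
  have "(\<Sum>j\<in>J. A i j * (c j + (\<Sum>k\<in>I. B j k * y k)))
     = (\<Sum>j\<in>J. A i j * c j) + (\<Sum>j\<in>J. \<Sum>k\<in>I. A i j * (B j k * y k))"
    by (simp add: distrib_left sum.distrib sum_distrib_left)
  also have "(\<Sum>j\<in>J. \<Sum>k\<in>I. A i j * (B j k * y k)) = (\<Sum>k\<in>I. (\<Sum>j\<in>J. A i j * B j k) * y k)"
    by (subst sum.swap) (simp add: sum_distrib_right mult.assoc)
  finally show ?thesis .
qed

text \<open>Precomposing with a network only changes the first affine layer.\<close>

lemma layered_compose_NN:
  fixes f :: "real^'n::finite \<Rightarrow> nat \<Rightarrow> real"
  assumes "layered m f" and h: "h \<in> NN_LReLU"
  shows "layered m (\<lambda>x. f (h x))"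
  using assms(1)
proof (induction rule: layered.induct)
  case (first m \<beta> b A)
  from h show ?case
  proof (cases rule: NN_LReLU_cases)
    case (1 A' b')
    have "layered m (\<lambda>x::real^'n. \<lambda>i. if i < m then lrelu \<beta> ((b i + (\<Sum>j\<in>UNIV. A i j * b' j))
            + (\<Sum>k\<in>UNIV. (\<Sum>j\<in>UNIV. A i j * A' j k) * x $ k)) else 0)"
      by (rule layered.first) (use first in auto)
    then show ?thesis
      by (rule back_subst[where P="layered m"]) (intro ext; simp add: 1 sum_mult_affine add.assoc)
  next
    case (2 m' f' B c)
    have "layered m (\<lambda>x::real^'n. \<lambda>i. if i < m then lrelu \<beta> ((b i + (\<Sum>j\<in>UNIV. A i j * c j))
            + (\<Sum>k<m'. (\<Sum>j\<in>UNIV. A i j * B j k) * f' x k)) else 0)"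
      by (rule layered.step[OF 2(1)]) (use first in auto)
    then show ?thesis
      by (rule back_subst[where P="layered m"]) (intro ext; simp add: 2 sum_mult_affine add.assoc)
  qed
next
  case (step m f n \<beta> b A)
  show ?case using layered.step[OF step.IH step.hyps(2,3), of \<beta> b A] by simp
qed

lemma NN_LReLU_compose:
  fixes g h :: "real^'n::finite \<Rightarrow> real^'n"
  assumes g: "g \<in> NN_LReLU" and h: "h \<in> NN_LReLU"
  shows "(\<lambda>x. g (h x)) \<in> NN_LReLU"
  using g
proof (cases rule: NN_LReLU_cases)
  case (1 A b)
  from h show ?thesis
  proof (cases rule: NN_LReLU_cases)
    case (1 A' b')
    show ?thesis
      by (rule NN_LReLU_affineI[where b="\<lambda>i. b i + (\<Sum>j\<in>UNIV. A i j * b' j)"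
            and A="\<lambda>i k. \<Sum>j\<in>UNIV. A i j * A' j k"])
         (simp add: \<open>g = _\<close> 1 sum_mult_affine add.assoc)
  next
    case (2 m' f' B c)
    show ?thesis
      by (rule NN_LReLU_layeredI[OF 2(1), where c="\<lambda>i. b i + (\<Sum>j\<in>UNIV. A i j * c j)"
            and B="\<lambda>i k. \<Sum>j\<in>UNIV. A i j * B j k"])
         (simp add: \<open>g = _\<close> 2 sum_mult_affine add.assoc)
  qed
next
  case (2 m f B c)
  show ?thesis by (rule NN_LReLU_layeredI[OF layered_compose_NN[OF 2(1) h]]) (simp add: 2)
qed

definition lrelu_vec :: "real \<Rightarrow> real^'n \<Rightarrow> real^'n::finite" where
  "lrelu_vec \<beta> x = (\<chi> i. lrelu \<beta> (x$i))"

lemma lrelu_vec_in_NN_LReLU: "lrelu_vec \<beta> \<in> (NN_LReLU :: (real^'n::finite \<Rightarrow> _) set)"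
proof -
  obtain idx :: "'n \<Rightarrow> nat" where idx: "bij_betw idx UNIV {..<CARD('n)}"
    using ex_bij_betw_finite_nat[of "UNIV::'n set"] by (auto simp: atLeast0LessThan)
  then have inj: "inj idx" and idx_less: "\<And>i. idx i < CARD('n)"
    by (auto simp: bij_betw_def)
  define f where "f = (\<lambda>x::real^'n. \<lambda>i. if i < CARD('n) then lrelu \<beta> (0 +
    (\<Sum>j\<in>UNIV. of_bool (i = idx j) * x $ j)) else 0)"
  have "layered CARD('n) f" unfolding f_def by (rule layered.first) (auto simp: Suc_le_eq)
  moreover have "f x (idx i) = lrelu \<beta> (x$i)" for x i
    using idx_less[of i] by (simp add: f_def inj_eq[OF inj])
  then have "lrelu_vec \<beta> = (\<lambda>x. \<chi> i. 0 + (\<Sum>j<CARD('n). of_bool (j = idx i) * f x j))"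
    using idx_less by (simp add: fun_eq_iff lrelu_vec_def)
  ultimately show ?thesis by (rule NN_LReLU_layeredI)
qed

definition vec_upd :: "'n \<Rightarrow> real^'n \<Rightarrow> real \<Rightarrow> real^'n::finite" where
  "vec_upd k x v = (\<chi> i. if i = k then v else x$i)"

lemma vec_upd_nth [simp]: "vec_upd k x v $ i = (if i = k then v else x$i)"
  by (simp add: vec_upd_def)

lemma vec_upd_same [simp]: "vec_upd k x (x$k) = x"
  by (simp add: vec_eq_iff)

lemma vec_upd_upd [simp]: "vec_upd k (vec_upd k x v) w = vec_upd k x w"
  by (simp add: vec_eq_iff)

lemma vec_upd_eq_iff [simp]: "vec_upd k x v = vec_upd k x w \<longleftrightarrow> v = w"
  by (metis vec_upd_nth)

lemma inner_vec_upd: "a \<bullet> vec_upd k x v = a \<bullet> x + a$k * (v - x$k)"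
proof -
  have "a \<bullet> vec_upd k x v = (\<Sum>j\<in>UNIV. a$j * x$j + of_bool (j = k) * (a$k * (v - x$k)))"
    unfolding inner_vec_def inner_real_def by (intro sum.cong) (auto simp: algebra_simps)
  then show ?thesis by (simp add: sum.distrib inner_vec_def)
qed

lemma continuous_on_vec_upd [continuous_intros]:
  assumes "continuous_on S f" "continuous_on S g"
  shows "continuous_on S (\<lambda>z. vec_upd k (f z) (g z))"
  unfolding vec_upd_def
proof (intro continuous_on_vec_lambda)
  show "continuous_on S (\<lambda>z. if i = k then g z else f z $ i)" for i
    by (cases "i = k") (simp_all add: assms continuous_on_component)
qed

lemma bounded_components:
  assumes "bounded (S::(real^'n::finite) set)"
  shows "\<exists>C. \<forall>x\<in>S. \<forall>i. \<bar>x$i\<bar> \<le> C"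
proof -
  obtain C where C: "\<forall>x\<in>S. norm x \<le> C"
    using assms by (auto simp: bounded_iff)
  have "\<bar>x$i\<bar> \<le> C" if "x \<in> S" for x i
    using C that component_le_norm_cart[of x i] by fastforce
  then show ?thesis by blast
qed

subsection \<open>Maps realized by networks on compact sets\<close>

definition NN_realizable :: "(real^'n \<Rightarrow> real^'n::finite) \<Rightarrow> bool" where
  "NN_realizable T \<longleftrightarrow> continuous_on UNIV T \<and> (\<forall>S. compact S \<longrightarrow> (\<exists>g\<in>NN_LReLU. \<forall>x\<in>S. g x = T x))"

text \<open>Continuity makes the images of compact sets compact, which is what makes realizability
  closed under composition.\<close>

lemma NN_realizable_compose:
  assumes F: "NN_realizable F" and G: "NN_realizable G"
  shows "NN_realizable (\<lambda>x. G (F x))"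
  unfolding NN_realizable_def
proof (intro conjI allI impI)
  show "continuous_on UNIV (\<lambda>x. G (F x))"
    using assms unfolding NN_realizable_def by (auto intro: continuous_on_compose2)
next
  fix S :: "(real^'a) set" assume S: "compact S"
  obtain g1 where g1: "g1 \<in> NN_LReLU" "\<forall>x\<in>S. g1 x = F x"
    using F S unfolding NN_realizable_def by blast
  have "compact (F ` S)"
    using F S unfolding NN_realizable_def by (auto intro: compact_continuous_image continuous_on_subset)
  then obtain g2 where g2: "g2 \<in> NN_LReLU" "\<forall>x\<in>F ` S. g2 x = G x"
    using G unfolding NN_realizable_def by blast
  show "\<exists>g\<in>NN_LReLU. \<forall>x\<in>S. g x = G (F x)"
    using g1 g2 NN_LReLU_compose[of g2 g1] by (intro bexI[of _ "\<lambda>x. g2 (g1 x)"]) auto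
qed

lemma NN_realizableI:
  assumes "T \<in> NN_LReLU" "continuous_on UNIV T"
  shows "NN_realizable T"
  unfolding NN_realizable_def using assms by (intro conjI allI impI bexI[of _ T]) auto

definition affine_fun :: "(real^'n::finite \<Rightarrow> real) \<Rightarrow> bool" where
  "affine_fun L \<longleftrightarrow> (\<exists>c a. \<forall>x. L x = c + a \<bullet> x)"

named_theorems affine_fun_intros

lemma affine_fun_const [affine_fun_intros]: "affine_fun (\<lambda>_. c)"
  unfolding affine_fun_def by (intro exI[of _ c] exI[of _ 0]) simp

lemma affine_fun_component [affine_fun_intros]: "affine_fun (\<lambda>x. x$k)"
  unfolding affine_fun_def
  by (intro exI[of _ 0] exI[of _ "axis k 1"]) (simp add: cart_eq_inner_axis inner_commute)

lemma affine_fun_inner [affine_fun_intros]: "affine_fun (\<lambda>x. a \<bullet> x)"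
  unfolding affine_fun_def by (intro exI[of _ 0] exI[of _ a]) simp

lemma affine_fun_add [affine_fun_intros]:
  assumes "affine_fun L1" "affine_fun L2"
  shows "affine_fun (\<lambda>x. L1 x + L2 x)"
proof -
  obtain c1 a1 c2 a2 where "\<And>x. L1 x = c1 + a1 \<bullet> x" "\<And>x. L2 x = c2 + a2 \<bullet> x"
    using assms unfolding affine_fun_def by blast
  then show ?thesis
    unfolding affine_fun_def by (intro exI[of _ "c1 + c2"] exI[of _ "a1 + a2"]) (simp add: inner_add_left)
qed

lemma affine_fun_scale [affine_fun_intros]:
  assumes "affine_fun L"
  shows "affine_fun (\<lambda>x. r * L x)"
proof -
  obtain c a where "\<And>x. L x = c + a \<bullet> x"
    using assms unfolding affine_fun_def by blast
  then show ?thesis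
    unfolding affine_fun_def by (intro exI[of _ "r * c"] exI[of _ "r *\<^sub>R a"]) (simp add: algebra_simps)
qed

lemma affine_fun_diff [affine_fun_intros]:
  "affine_fun L1 \<Longrightarrow> affine_fun L2 \<Longrightarrow> affine_fun (\<lambda>x. L1 x - L2 x)"
  using affine_fun_add[of L1 "\<lambda>x. (-1) * L2 x"] affine_fun_scale[of L2 "-1"] by simp

lemma affine_fun_divide [affine_fun_intros]: "affine_fun L \<Longrightarrow> affine_fun (\<lambda>x. L x / r)"
  using affine_fun_scale[of L "1/r"] by simp

lemma continuous_on_affine_fun:
  assumes "affine_fun L"
  shows "continuous_on S L"
proof -
  obtain c a where "\<And>x. L x = c + a \<bullet> x"
    using assms unfolding affine_fun_def by blast
  then have "L = (\<lambda>x. c + a \<bullet> x)" by (simp add: fun_eq_iff)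
  then show ?thesis by (simp add: continuous_intros)
qed

lemma NN_realizable_vec_upd_affine:
  assumes "affine_fun L"
  shows "NN_realizable (\<lambda>x. vec_upd k x (L x))"
proof -
  obtain c a where L: "\<And>x. L x = c + a \<bullet> x"
    using assms unfolding affine_fun_def by blast
  have "(\<lambda>x. vec_upd k x (L x)) = (\<lambda>x. \<chi> i. of_bool (i = k) * c +
          (\<Sum>j\<in>UNIV. (if i = k then a$j else of_bool (i = j)) * x$j))"
  proof (intro ext iffD2[OF vec_eq_iff] allI)
    show "vec_upd k x (L x) $ i = (\<chi> i. of_bool (i = k) * c +
          (\<Sum>j\<in>UNIV. (if i = k then a$j else of_bool (i = j)) * x$j)) $ i" for x i
      by (cases "i = k") (simp_all add: L inner_vec_def inner_real_def)
  qed
  then have "(\<lambda>x. vec_upd k x (L x)) \<in> NN_LReLU"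
    by (rule NN_LReLU_affineI)
  moreover have "continuous_on UNIV (\<lambda>x. vec_upd k x (L x))"
    using continuous_on_affine_fun[OF assms] by (intro continuous_on_vec_upd continuous_on_id)
  ultimately show ?thesis by (rule NN_realizableI)
qed

lemma NN_realizable_id: "NN_realizable (\<lambda>x. x)"
  using NN_realizable_vec_upd_affine[OF affine_fun_component, of k k] by simp

lemma continuous_lrelu [continuous_intros]:
  "continuous_on S f \<Longrightarrow> continuous_on S (\<lambda>x. lrelu \<beta> (f x))"
proof -
  have "lrelu \<beta> = (\<lambda>t. max t 0 + \<beta> * min t 0)"
    by (auto simp: lrelu_def fun_eq_iff)
  then show "continuous_on S f \<Longrightarrow> continuous_on S (\<lambda>x. lrelu \<beta> (f x))"
    by (simp only:) (auto intro!: continuous_intros)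
qed

lemma lrelu_nonneg [simp]: "t \<ge> 0 \<Longrightarrow> lrelu \<beta> t = t"
  by (simp add: lrelu_def)

text \<open>On a bounded set, the other coordinates are first shifted into the region where
  the leaky ReLU is the identity.\<close>

lemma NN_realizable_lrelu_component: "NN_realizable (\<lambda>x. vec_upd k x (lrelu \<beta> (x$k)))"
  unfolding NN_realizable_def
proof (intro conjI allI impI)
  show "continuous_on UNIV (\<lambda>x. vec_upd k x (lrelu \<beta> (x$k)))"
    by (intro continuous_on_vec_upd continuous_lrelu continuous_on_component continuous_on_id)
next
  fix S :: "(real^'a) set" assume "compact S"
  then obtain C where C: "\<And>x i. x \<in> S \<Longrightarrow> \<bar>x$i\<bar> \<le> C"
    using bounded_components[OF compact_imp_bounded] by meson
  define shift where "shift r = (\<lambda>x::real^'a. \<chi> i. of_bool (i \<noteq> k) * r + (\<Sum>j\<in>UNIV. of_bool (i = j) * x$j))" for r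
  have shift_NN: "shift r \<in> NN_LReLU" for r
    unfolding shift_def by (rule NN_LReLU_affineI) (rule refl)
  have eq: "shift (-C) (lrelu_vec \<beta> (shift C x)) = vec_upd k x (lrelu \<beta> (x$k))" if "x \<in> S" for x
  proof -
    have "C + x$i \<ge> 0" for i
      using C[OF that, of i] by linarith
    then have "shift (-C) (lrelu_vec \<beta> (shift C x)) $ i = vec_upd k x (lrelu \<beta> (x$k)) $ i" for i
      by (cases "i = k") (simp_all add: shift_def lrelu_vec_def)
    then show ?thesis by (simp add: vec_eq_iff)
  qed
  have "(\<lambda>x. shift (-C) (lrelu_vec \<beta> (shift C x))) \<in> NN_LReLU"
    using NN_LReLU_compose[OF shift_NN NN_LReLU_compose[OF lrelu_vec_in_NN_LReLU shift_NN]] .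
  then show "\<exists>g\<in>NN_LReLU. \<forall>x\<in>S. g x = vec_upd k x (lrelu \<beta> (x$k))"
    using eq by (intro bexI[of _ "\<lambda>x. shift (-C) (lrelu_vec \<beta> (shift C x))"]) auto
qed

subsection \<open>Shears along one coordinate\<close>

definition coord_indep :: "'n \<Rightarrow> (real^'n::finite \<Rightarrow> real) \<Rightarrow> bool" where
  "coord_indep l h \<longleftrightarrow> (\<forall>x v. h (vec_upd l x v) = h x)"

definition shear :: "'n \<Rightarrow> (real^'n::finite \<Rightarrow> real) \<Rightarrow> real^'n \<Rightarrow> real^'n" where
  "shear l h x = vec_upd l x (x$l + h x)"

definition shear_heights :: "'n \<Rightarrow> (real^'n::finite \<Rightarrow> real) set" where
  "shear_heights l = {h. coord_indep l h \<and> continuous_on UNIV h \<and> NN_realizable (shear l h)}"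

lemma shear_heightsD:
  assumes "h \<in> shear_heights l"
  shows "coord_indep l h" "continuous_on UNIV h" "NN_realizable (shear l h)"
  using assms unfolding shear_heights_def by auto

lemma coord_indep_inner_iff:
  assumes "coord_indep l (\<lambda>x. c + a \<bullet> x)"
  shows "a$l = 0"
  using assms[unfolded coord_indep_def, rule_format, of 0 "1 + 0$l"] by (simp add: inner_vec_upd)

lemma shear_heights_zero: "(\<lambda>_. 0) \<in> shear_heights l"
proof -
  have "shear l (\<lambda>_. 0) = (\<lambda>x. x)"
    by (simp add: fun_eq_iff shear_def)
  then show ?thesis
    using NN_realizable_id by (simp add: shear_heights_def coord_indep_def)
qed

text \<open>Shears along the same coordinate compose additively when the heights ignore that coordinate.\<close>

lemma shear_heights_add:
  assumes h1: "h1 \<in> shear_heights l" and h2: "h2 \<in> shear_heights l"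
  shows "(\<lambda>x. h1 x + h2 x) \<in> shear_heights l"
proof -
  have "shear l (\<lambda>x. h1 x + h2 x) = (\<lambda>x. shear l h2 (shear l h1 x))"
    using shear_heightsD(1)[OF h2] by (simp add: fun_eq_iff shear_def coord_indep_def add.assoc)
  then have "NN_realizable (shear l (\<lambda>x. h1 x + h2 x))"
    using NN_realizable_compose[OF shear_heightsD(3)[OF h1] shear_heightsD(3)[OF h2]] by simp
  moreover have "coord_indep l (\<lambda>x. h1 x + h2 x)"
    using shear_heightsD(1)[OF h1] shear_heightsD(1)[OF h2] by (simp add: coord_indep_def)
  moreover have "continuous_on UNIV (\<lambda>x. h1 x + h2 x)"
    using shear_heightsD(2)[OF h1] shear_heightsD(2)[OF h2] by (rule continuous_on_add)
  ultimately show ?thesis unfolding shear_heights_def by blast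
qed

text \<open>Scaling is conjugation of the shear by a rescaling of coordinate \<open>l\<close>.\<close>

lemma shear_heights_scale:
  assumes h: "h \<in> shear_heights l"
  shows "(\<lambda>x. r * h x) \<in> shear_heights l"
proof (cases "r = 0")
  case True
  then show ?thesis using shear_heights_zero by simp
next
  case False
  have conj: "shear l (\<lambda>x. r * h x) =
          (\<lambda>x. vec_upd l (shear l h (vec_upd l x (x$l / r))) (r * shear l h (vec_upd l x (x$l / r)) $ l))"
    using shear_heightsD(1)[OF h] False by (simp add: fun_eq_iff shear_def coord_indep_def distrib_left)
  have "NN_realizable (\<lambda>x. vec_upd l (shear l h (vec_upd l x (x$l / r)))
          (r * shear l h (vec_upd l x (x$l / r)) $ l))"
  proof -
    have "NN_realizable (\<lambda>x. vec_upd l x (c * x$l))" for c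
      by (intro NN_realizable_vec_upd_affine affine_fun_intros)
    from NN_realizable_compose[OF NN_realizable_compose[OF this[of "1/r"] shear_heightsD(3)[OF h]] this[of r]]
    show ?thesis by simp
  qed
  then have "NN_realizable (shear l (\<lambda>x. r * h x))"
    unfolding conj .
  moreover have "coord_indep l (\<lambda>x. r * h x)"
    using shear_heightsD(1)[OF h] by (simp add: coord_indep_def)
  moreover have "continuous_on UNIV (\<lambda>x. r * h x)"
    using shear_heightsD(2)[OF h] by (rule continuous_on_mult_left)
  ultimately show ?thesis unfolding shear_heights_def by blast
qed

lemma shear_heights_diff:
  "h1 \<in> shear_heights l \<Longrightarrow> h2 \<in> shear_heights l \<Longrightarrow> (\<lambda>x. h1 x - h2 x) \<in> shear_heights l"
  using shear_heights_add[of h1 l "\<lambda>x. (-1) * h2 x"] shear_heights_scale[of h2 l "-1"] by simp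

lemma shear_heights_sum:
  "finite I \<Longrightarrow> (\<And>i. i \<in> I \<Longrightarrow> f i \<in> shear_heights l) \<Longrightarrow> (\<lambda>x. \<Sum>i\<in>I. f i x) \<in> shear_heights l"
  by (induction I rule: finite_induct) (simp_all add: shear_heights_zero shear_heights_add)

lemma shear_heights_affine:
  assumes "affine_fun L" "coord_indep l L"
  shows "L \<in> shear_heights l"
proof -
  have "NN_realizable (shear l L)"
    unfolding shear_def[abs_def]
    by (intro NN_realizable_vec_upd_affine affine_fun_intros assms(1))
  then show ?thesis
    using assms continuous_on_affine_fun unfolding shear_heights_def by blast
qed

lemma shear_heights_const: "(\<lambda>_. c) \<in> shear_heights l"
  by (intro shear_heights_affine affine_fun_intros) (simp add: coord_indep_def)

lemma lrelu_2_lrelu_half: "lrelu 2 (lrelu (1/2) t) = t"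
  by (simp add: lrelu_def)

lemma two_lrelu_half_minus: "2 * lrelu (1/2) t - t = max 0 t"
  by (simp add: lrelu_def)

text \<open>The ReLU of an affine function is obtained by six realizable maps: coordinate \<open>k\<close>
  temporarily stores \<open>L x\<close> (recoverable since \<open>a$k \<noteq> 0\<close>), passes through the invertible pair of
  leaky ReLUs with slopes \<open>1/2\<close> and \<open>2\<close>, and in between the value \<open>2 lrelu (1/2) (L x) - L x\<close>
  is transferred to coordinate \<open>l\<close>.\<close>

lemma NN_realizable_shear_relu:
  fixes a :: "real^'n::finite"
  assumes ak: "a$k \<noteq> 0" and al: "a$l = 0"
  shows "NN_realizable (shear l (\<lambda>x. max 0 (c + a \<bullet> x)))"
proof -
  have kl: "k \<noteq> l"
    using ak al by auto
  define L where "L x = c + a \<bullet> x" for x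
  have L: "affine_fun L"
    unfolding L_def[abs_def] by (intro affine_fun_intros)
  have L_upd: "L (vec_upd i y v) = L y + a$i * (v - y$i)" for i y v
    by (simp add: L_def inner_vec_upd)
  define M1 where "M1 x = vec_upd k x (L x)" for x
  define M2 where "M2 x = vec_upd k x (lrelu (1/2) (x$k))" for x :: "real^'n"
  define M3 where "M3 x = vec_upd l x (x$l + 2 * x$k)" for x :: "real^'n"
  define M4 where "M4 x = vec_upd k x (lrelu 2 (x$k))" for x :: "real^'n"
  define M5 where "M5 x = vec_upd k x ((x$k + a$k * x$k - L x) / a$k)" for x
  define M6 where "M6 x = vec_upd l x (x$l - L x)" for x
  have r1: "NN_realizable M1" and r3: "NN_realizable M3"
    and r5: "NN_realizable M5" and r6: "NN_realizable M6"
    unfolding M1_def[abs_def] M3_def[abs_def] M5_def[abs_def] M6_def[abs_def]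
    by (intro NN_realizable_vec_upd_affine affine_fun_intros L)+
  have r2: "NN_realizable M2" and r4: "NN_realizable M4"
    unfolding M2_def[abs_def] M4_def[abs_def] by (rule NN_realizable_lrelu_component)+
  have "M6 (M5 (M4 (M3 (M2 (M1 x))))) = shear l (\<lambda>x. max 0 (L x)) x" for x
  proof -
    define t where "t = L x"
    define w where "w = x$l + 2 * lrelu (1/2) t"
    have "M4 (M3 (M2 (M1 x))) = vec_upd l (vec_upd k x t) w"
      using kl by (simp add: M1_def M2_def M3_def M4_def w_def t_def lrelu_2_lrelu_half vec_eq_iff)
    moreover have "M5 (vec_upd l (vec_upd k x t) w) = vec_upd l x w"
      using kl ak al by (simp add: M5_def L_upd t_def field_simps vec_eq_iff)
    moreover have "M6 (vec_upd l x w) = shear l (\<lambda>x. max 0 (L x)) x"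
      using al by (simp add: M6_def shear_def L_upd w_def t_def two_lrelu_half_minus[symmetric])
    ultimately show ?thesis by simp
  qed
  then have "shear l (\<lambda>x. max 0 (L x)) = (\<lambda>x. M6 (M5 (M4 (M3 (M2 (M1 x))))))"
    by (simp add: fun_eq_iff)
  then show ?thesis
    unfolding L_def using NN_realizable_compose[OF NN_realizable_compose[OF NN_realizable_compose[OF
      NN_realizable_compose[OF NN_realizable_compose[OF r1 r2] r3] r4] r5] r6] by simp
qed

lemma shear_heights_relu_affine:
  assumes "affine_fun L" "coord_indep l L"
  shows "(\<lambda>x. max 0 (L x)) \<in> shear_heights l"
proof -
  obtain c a where "\<And>x. L x = c + a \<bullet> x"
    using assms(1) unfolding affine_fun_def by blast
  then have L: "L = (\<lambda>x. c + a \<bullet> x)"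
    by (simp add: fun_eq_iff)
  then have al: "a$l = 0"
    using assms(2) coord_indep_inner_iff by blast
  have "NN_realizable (shear l (\<lambda>x. max 0 (L x)))"
  proof (cases "a = 0")
    case True
    then show ?thesis
      using shear_heightsD(3)[OF shear_heights_const[of "max 0 c" l]] by (simp add: L)
  next
    case False
    then obtain k where "a$k \<noteq> 0"
      by (auto simp: vec_eq_iff)
    then show ?thesis
      unfolding L by (rule NN_realizable_shear_relu[OF _ al])
  qed
  moreover have "continuous_on UNIV (\<lambda>x. max 0 (L x))"
    using continuous_on_affine_fun[OF assms(1)] by (intro continuous_on_max continuous_on_const)
  moreover have "coord_indep l (\<lambda>x. max 0 (L x))"
    using assms(2) by (simp add: coord_indep_def)
  ultimately show ?thesis
    unfolding shear_heights_def by blast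
qed

definition clamp01 :: "real \<Rightarrow> real" where
  "clamp01 z = max 0 z - max 0 (z - 1)"

lemma clamp01_ge1: "z \<ge> 1 \<Longrightarrow> clamp01 z = 1"
  by (simp add: clamp01_def)

lemma clamp01_le0: "z \<le> 0 \<Longrightarrow> clamp01 z = 0"
  by (simp add: clamp01_def)

lemma clamp01_nonneg: "0 \<le> clamp01 z"
  and clamp01_le1: "clamp01 z \<le> 1"
  by (auto simp: clamp01_def)

lemma shear_heights_clamp01_affine:
  assumes "affine_fun L" "coord_indep l L"
  shows "(\<lambda>x. clamp01 (L x)) \<in> shear_heights l"
  unfolding clamp01_def
  using assms by (intro shear_heights_diff shear_heights_relu_affine affine_fun_intros)
    (auto simp: coord_indep_def)

subsection \<open>Piecewise linear interpolation on a grid\<close>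

lemma obtain_grid_cell:
  fixes A D t :: real and N :: nat
  assumes "D > 0" "N > 0" "A \<le> t" "t \<le> A + N * D"
  obtains j where "j < N" "A + j * D \<le> t" "t \<le> A + Suc j * D"
proof -
  define j where "j = nat \<lfloor>(t - A) / D\<rfloor>"
  have "0 \<le> (t - A) / D"
    using assms by simp
  then have "j \<le> (t - A) / D" "(t - A) / D < j + 1"
    unfolding j_def by linarith+
  then have j: "A + j * D \<le> t" "t < A + (j + 1) * D"
    using assms(1) by (simp_all add: field_simps)
  show ?thesis
  proof (cases "j < N")
    case True
    then show ?thesis
      using j by (intro that[of j]) auto
  next
    case False
    then have "N * D \<le> j * D"
      using assms(1) by (intro mult_right_mono) auto
    then have "t = A + N * D"
      using j assms(4) by linarith
    then show ?thesis
      using assms by (intro that[of "N - 1"]) (auto simp: of_nat_diff algebra_simps)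
  qed
qed

lemma sum_lessThan_split_at:
  fixes f d :: "nat \<Rightarrow> real"
  assumes "j < N" "\<And>k. k < j \<Longrightarrow> f k = d k" "\<And>k. j < k \<Longrightarrow> k < N \<Longrightarrow> f k = 0"
  shows "(\<Sum>k<N. f k) = (\<Sum>k<j. d k) + f j"
  using assms
proof (induction N)
  case (Suc n)
  show ?case
  proof (cases "j = n")
    case True
    then have "(\<Sum>k<n. f k) = (\<Sum>k<n. d k)"
      using Suc.prems by (intro sum.cong) auto
    with True show ?thesis by simp
  next
    case False
    then show ?thesis using Suc by simp
  qed
qed simp

lemma sum_clamp01_grid:
  fixes c \<eta> :: "nat \<Rightarrow> real" and D p0 u :: real
  assumes j: "j < N" and \<eta>: "\<And>k. k < N \<Longrightarrow> 0 < \<eta> k \<and> \<eta> k \<le> D"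
    and u: "p0 + j * D \<le> u" "u \<le> p0 + Suc j * D"
  shows "(\<Sum>k<N. c k * clamp01 ((u - (p0 + k * D)) / \<eta> k))
       = (\<Sum>k<j. c k) + c j * clamp01 ((u - (p0 + j * D)) / \<eta> j)"
proof (rule sum_lessThan_split_at[OF j])
  have D: "D > 0" using \<eta>[OF j] by linarith
  fix k
  assume "k < j"
  then have "(Suc k) * D \<le> j * D"
    using D by (intro mult_right_mono) auto
  then have "\<eta> k \<le> u - (p0 + k * D)"
    using \<eta>[of k] \<open>k < j\<close> j u by (auto simp: algebra_simps)
  then show "c k * clamp01 ((u - (p0 + k * D)) / \<eta> k) = c k"
    using \<eta>[of k] \<open>k < j\<close> j by (simp add: clamp01_ge1)
next
  have D: "D > 0" using \<eta>[OF j] by linarith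
  fix k
  assume "j < k" "k < N"
  then have "Suc j * D \<le> k * D"
    using D by (intro mult_right_mono) auto
  then have "u - (p0 + k * D) \<le> 0"
    using u by simp
  then show "c k * clamp01 ((u - (p0 + k * D)) / \<eta> k) = 0"
    using \<eta>[of k] \<open>k < N\<close> by (simp add: clamp01_le0 divide_nonpos_pos)
qed

lemma clamp01_interpolation:
  fixes \<phi> :: "real \<Rightarrow> real" and A D t :: real and N :: nat
  assumes D: "D > 0" and N: "N > 0" and t: "A \<le> t" "t \<le> A + N * D"
    and modulus: "\<And>s r. s \<in> {A..A + N * D} \<Longrightarrow> r \<in> {A..A + N * D} \<Longrightarrow> \<bar>s - r\<bar> \<le> D
        \<Longrightarrow> \<bar>\<phi> s - \<phi> r\<bar> < e / 2"
  shows "\<bar>\<phi> t - (\<phi> A + (\<Sum>k<N. (\<phi> (A + Suc k * D) - \<phi> (A + k * D))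
            * clamp01 ((t - (A + k * D)) / D)))\<bar> < e"
proof -
  obtain j where j: "j < N" "A + j * D \<le> t" "t \<le> A + Suc j * D"
    using obtain_grid_cell[OF D N t] .
  define g where "g k = A + k * D" for k
  define \<theta> where "\<theta> = clamp01 ((t - g j) / D)"
  have "(\<Sum>k<N. (\<phi> (g (Suc k)) - \<phi> (g k)) * clamp01 ((t - g k) / D))
      = (\<Sum>k<j. \<phi> (g (Suc k)) - \<phi> (g k)) + (\<phi> (g (Suc j)) - \<phi> (g j)) * \<theta>"
    unfolding g_def \<theta>_def using j D by (intro sum_clamp01_grid) auto
  also have "(\<Sum>k<j. \<phi> (g (Suc k)) - \<phi> (g k)) = \<phi> (g j) - \<phi> A"
    using sum_lessThan_telescope[of "\<lambda>k. \<phi> (g k)" j] by (simp add: g_def)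
  finally have sum: "(\<Sum>k<N. (\<phi> (g (Suc k)) - \<phi> (g k)) * clamp01 ((t - g k) / D))
      = \<phi> (g j) - \<phi> A + (\<phi> (g (Suc j)) - \<phi> (g j)) * \<theta>" .
  have grid: "g j \<in> {A..A + N * D}" "g (Suc j) \<in> {A..A + N * D}"
    using j D by (auto simp: g_def intro!: mult_right_mono)
  have "\<bar>\<phi> t - \<phi> (g j)\<bar> < e / 2"
    using j t grid by (intro modulus) (auto simp: g_def algebra_simps)
  moreover have "\<bar>\<phi> (g (Suc j)) - \<phi> (g j)\<bar> < e / 2"
    using grid D by (intro modulus) (auto simp: g_def algebra_simps)
  moreover have "\<bar>(\<phi> (g (Suc j)) - \<phi> (g j)) * \<theta>\<bar> \<le> \<bar>\<phi> (g (Suc j)) - \<phi> (g j)\<bar>"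
    using clamp01_nonneg clamp01_le1 by (simp add: \<theta>_def abs_mult mult_left_le)
  ultimately show ?thesis
    using sum unfolding g_def by linarith
qed

lemma uniform_grid:
  fixes \<phi> :: "'a::metric_space \<Rightarrow> real \<Rightarrow> real"
  assumes "compact K" "continuous_on (K \<times> {A..B}) (\<lambda>(x, t). \<phi> x t)" "e > 0"
  shows "\<exists>N::nat>0. \<forall>x\<in>K. \<forall>s\<in>{A..B}. \<forall>t\<in>{A..B}.
    \<bar>s - t\<bar> \<le> (B - A) / N \<longrightarrow> \<bar>\<phi> x s - \<phi> x t\<bar> < e"
proof -
  have "uniformly_continuous_on (K \<times> {A..B}) (\<lambda>(x, t). \<phi> x t)"
    using assms by (intro compact_uniformly_continuous compact_Times) auto
  then obtain d where d: "d > 0" and close: "\<forall>z\<in>K \<times> {A..B}. \<forall>z'\<in>K \<times> {A..B}.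
      dist z' z < d \<longrightarrow> dist ((\<lambda>(x, t). \<phi> x t) z') ((\<lambda>(x, t). \<phi> x t) z) < e"
    unfolding uniformly_continuous_on_def using assms(3) by blast
  define N where "N = nat \<lceil>(B - A) / d\<rceil> + 1"
  have "(B - A) / d < N"
    unfolding N_def by linarith
  then have small: "(B - A) / N < d"
    using d by (simp add: N_def field_simps)
  show ?thesis
  proof (intro exI[of _ N] conjI ballI impI)
    fix x s t
    assume "x \<in> K" "s \<in> {A..B}" "t \<in> {A..B}" "\<bar>s - t\<bar> \<le> (B - A) / N"
    then show "\<bar>\<phi> x s - \<phi> x t\<bar> < e"
      using close[rule_format, of "(x, t)" "(x, s)"] small by (simp add: dist_Pair_Pair dist_real_def)
  qed (simp add: N_def)
qed

lemma exp_inner_approx: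
  fixes a :: "real^'n::finite"
  assumes S: "compact S" and al: "a$l = 0" and \<delta>: "\<delta> > 0"
  shows "\<exists>h\<in>shear_heights l. \<forall>x\<in>S. \<bar>exp (a \<bullet> x) - h x\<bar> < \<delta>"
proof -
  have "bounded ((\<lambda>x. a \<bullet> x) ` S)"
    using continuous_on_inner[OF continuous_on_const continuous_on_id] S
    by (intro compact_imp_bounded compact_continuous_image)
  then obtain M where "M > 0" "\<forall>y\<in>(\<lambda>x. a \<bullet> x) ` S. norm y \<le> M"
    unfolding bounded_pos by blast
  then have M: "M > 0" "\<And>x. x \<in> S \<Longrightarrow> \<bar>a \<bullet> x\<bar> \<le> M"
    by auto
  have "continuous_on ({0::real} \<times> {-M..M}) (\<lambda>(_, t). exp t)"
    by (simp add: case_prod_beta) (intro continuous_on_exp continuous_on_snd continuous_on_id)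
  from uniform_grid[OF compact_sing this half_gt_zero[OF \<delta>]]
  obtain N :: nat where N: "N > 0" and modulus0: "\<forall>x\<in>{0}. \<forall>s\<in>{-M..M}. \<forall>t\<in>{-M..M}.
      \<bar>s - t\<bar> \<le> (M - - M) / N \<longrightarrow> \<bar>exp s - exp t\<bar> < \<delta> / 2"
    by blast
  define D where "D = 2 * M / N"
  have D: "D > 0" "- M + N * D = M"
    using M N by (simp_all add: D_def)
  have modulus: "\<bar>exp s - exp t\<bar> < \<delta> / 2"
    if "s \<in> {-M..M}" "t \<in> {-M..M}" "\<bar>s - t\<bar> \<le> D" for s t
    using modulus0 that by (simp add: D_def)
  define w where "w k = exp (- M + Suc k * D) - exp (- M + k * D)" for k
  define h where "h x = exp (- M) + (\<Sum>k<N. w k * clamp01 ((a \<bullet> x - (- M + k * D)) / D))" for x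
  have "(\<lambda>x. clamp01 ((a \<bullet> x - (- M + k * D)) / D)) \<in> shear_heights l" for k
    by (intro shear_heights_clamp01_affine affine_fun_intros)
      (simp add: coord_indep_def inner_vec_upd al)
  then have "h \<in> shear_heights l"
    unfolding h_def[abs_def]
    by (intro shear_heights_add shear_heights_const shear_heights_sum shear_heights_scale) auto
  moreover have "\<bar>exp (a \<bullet> x) - h x\<bar> < \<delta>" if x: "x \<in> S" for x
    unfolding h_def w_def
    by (rule clamp01_interpolation[OF D(1) N]) (use M(2)[OF x] D(2) modulus in auto)
  ultimately show ?thesis by blast
qed

subsection \<open>Density of the shear heights\<close>

definition exp_sum :: "(real \<times> (real^'n::finite)) list \<Rightarrow> real^'n \<Rightarrow> real" where
  "exp_sum ps x = (\<Sum>p\<leftarrow>ps. fst p * exp (snd p \<bullet> x))"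

definition exp_sums :: "'n::finite \<Rightarrow> (real^'n \<Rightarrow> real) set" where
  "exp_sums l = {exp_sum ps | ps. \<forall>p\<in>set ps. snd p $ l = 0}"

lemma exp_sum_Nil [simp]: "exp_sum [] x = 0"
  by (simp add: exp_sum_def)

lemma exp_sum_Cons [simp]: "exp_sum (p # ps) x = fst p * exp (snd p \<bullet> x) + exp_sum ps x"
  by (simp add: exp_sum_def)

lemma exp_sum_append: "exp_sum (ps @ qs) x = exp_sum ps x + exp_sum qs x"
  by (simp add: exp_sum_def)

lemma exp_sum_mult:
  "exp_sum ps x * exp_sum qs x = exp_sum [(fst p * fst q, snd p + snd q). p \<leftarrow> ps, q \<leftarrow> qs] x"
proof (induction ps)
  case (Cons p ps)
  have "fst p * exp (snd p \<bullet> x) * exp_sum qs x = exp_sum (map (\<lambda>q. (fst p * fst q, snd p + snd q)) qs) x"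
    by (induction qs) (simp_all add: algebra_simps exp_add inner_add_left)
  with Cons show ?case
    by (simp add: exp_sum_append distrib_right)
qed simp

lemma continuous_on_exp_sum: "continuous_on S (exp_sum ps)"
proof (induction ps)
  case Nil
  then show ?case by (simp add: exp_sum_def[abs_def])
next
  case (Cons p ps)
  have "exp_sum (p # ps) = (\<lambda>x. fst p * exp (snd p \<bullet> x) + exp_sum ps x)"
    by (simp add: fun_eq_iff)
  with Cons show ?case
    by (simp add: continuous_intros)
qed

lemma function_ring_on_exp_sums:
  assumes S: "compact S" and Sl: "\<And>x. x \<in> S \<Longrightarrow> x$l = 0"
  shows "function_ring_on (exp_sums l) S"
proof
  fix f g
  assume "f \<in> exp_sums l" "g \<in> exp_sums l"
  then obtain ps qs where fg: "f = exp_sum ps" "g = exp_sum qs"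
    and freq: "\<forall>p\<in>set ps. snd p $ l = 0" "\<forall>q\<in>set qs. snd q $ l = 0"
    unfolding exp_sums_def by blast
  show "(\<lambda>x. f x + g x) \<in> exp_sums l"
    unfolding exp_sums_def using fg freq
    by (auto simp: exp_sum_append fun_eq_iff intro!: exI[of _ "ps @ qs"]) (use freq in force)+
  show "(\<lambda>x. f x * g x) \<in> exp_sums l"
    unfolding exp_sums_def using fg freq
    by (auto simp: exp_sum_mult fun_eq_iff
        intro!: exI[of _ "[(fst p * fst q, snd p + snd q). p \<leftarrow> ps, q \<leftarrow> qs]"])
      (use freq in force)
next
  fix c
  show "(\<lambda>_. c) \<in> exp_sums l"
    unfolding exp_sums_def by (auto intro!: exI[of _ "[(c, 0)]"])
next
  fix x y
  assume xy: "x \<in> S" "y \<in> S" "x \<noteq> y"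
  then obtain i where i: "x$i \<noteq> y$i"
    by (auto simp: vec_eq_iff)
  with xy Sl have "i \<noteq> l" by auto
  then have "exp_sum [(1, axis i 1)] \<in> exp_sums l"
    unfolding exp_sums_def by (auto intro!: exI[of _ "[(1, axis i 1)]"] simp: axis_def)
  moreover have "exp_sum [(1, axis i 1)] x \<noteq> exp_sum [(1, axis i 1)] y"
    using i by (simp add: inner_axis')
  ultimately show "\<exists>f\<in>exp_sums l. f x \<noteq> f y" by blast
qed (use S continuous_on_exp_sum in \<open>auto simp: exp_sums_def\<close>)

lemma exp_sum_approx:
  assumes "compact S" "\<forall>p\<in>set ps. snd p $ l = 0" "\<delta> > 0"
  shows "\<exists>h\<in>shear_heights l. \<forall>x\<in>S. \<bar>exp_sum ps x - h x\<bar> < \<delta>"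
  using assms(2,3)
proof (induction ps arbitrary: \<delta>)
  case Nil
  then show ?case by (intro bexI[of _ "\<lambda>_. 0"] shear_heights_zero) simp
next
  case (Cons p ps)
  obtain c a where p: "p = (c, a)" by fastforce
  have al: "a$l = 0"
    using Cons.prems p by auto
  have "\<delta> / (2 * (\<bar>c\<bar> + 1)) > 0"
    using Cons.prems by (simp add: add_pos_nonneg)
  then obtain h1 where h1: "h1 \<in> shear_heights l"
    "\<And>x. x \<in> S \<Longrightarrow> \<bar>exp (a \<bullet> x) - h1 x\<bar> < \<delta> / (2 * (\<bar>c\<bar> + 1))"
    using exp_inner_approx[OF assms(1) al] by blast
  obtain h2 where h2: "h2 \<in> shear_heights l" "\<forall>x\<in>S. \<bar>exp_sum ps x - h2 x\<bar> < \<delta> / 2"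
    using Cons.IH[of "\<delta> / 2"] Cons.prems by auto
  have first: "\<bar>c * exp (a \<bullet> x) - c * h1 x\<bar> < \<delta> / 2" if "x \<in> S" for x
  proof -
    have "\<bar>c * exp (a \<bullet> x) - c * h1 x\<bar> = \<bar>c\<bar> * \<bar>exp (a \<bullet> x) - h1 x\<bar>"
      by (simp add: abs_mult[symmetric] right_diff_distrib)
    also have "\<dots> \<le> \<bar>c\<bar> * (\<delta> / (2 * (\<bar>c\<bar> + 1)))"
      using h1(2)[OF that] by (intro mult_left_mono) auto
    also have "\<dots> < \<delta> / 2"
      using Cons.prems by (simp add: field_simps)
    finally show ?thesis .
  qed
  have "\<forall>x\<in>S. \<bar>exp_sum (p # ps) x - (c * h1 x + h2 x)\<bar> < \<delta>"
  proof
    fix x assume that: "x \<in> S"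
    show "\<bar>exp_sum (p # ps) x - (c * h1 x + h2 x)\<bar> < \<delta>"
      using first[OF that] h2(2)[rule_format, OF that] by (simp add: p) (smt (verit))
  qed
  moreover have "(\<lambda>x. c * h1 x + h2 x) \<in> shear_heights l"
    by (intro shear_heights_add shear_heights_scale h1(1) h2(1))
  ultimately show ?case
    by (rule bexI[of _ "\<lambda>x. c * h1 x + h2 x"])
qed

text \<open>A continuous function ignoring coordinate \<open>l\<close> is determined by its values on the
  hyperplane \<open>x$l = 0\<close>, where exponential sums with frequencies in that hyperplane separate
  points; Stone--Weierstrass applies there.\<close>

lemma shear_heights_dense:
  fixes u :: "real^'n::finite \<Rightarrow> real"
  assumes K: "compact K" and u: "continuous_on UNIV u" "coord_indep l u" and e: "e > 0"
  shows "\<exists>h\<in>shear_heights l. \<forall>x\<in>K. \<bar>u x - h x\<bar> < e"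
proof -
  define S where "S = (\<lambda>x. vec_upd l x 0) ` K"
  have S: "compact S"
    unfolding S_def
    by (intro compact_continuous_image K continuous_on_vec_upd continuous_on_id continuous_on_const)
  interpret function_ring_on "exp_sums l" S
    by (rule function_ring_on_exp_sums[OF S]) (auto simp: S_def)
  obtain g where g: "g \<in> exp_sums l" "\<forall>x\<in>S. \<bar>u x - g x\<bar> < e / 2"
    using Stone_Weierstrass_basic[OF continuous_on_subset[OF u(1)], of "e/2"] e by auto
  then obtain ps where ps: "\<forall>p\<in>set ps. snd p $ l = 0" "g = exp_sum ps"
    unfolding exp_sums_def by blast
  obtain h where h: "h \<in> shear_heights l" "\<forall>x\<in>S. \<bar>exp_sum ps x - h x\<bar> < e / 2"
    using exp_sum_approx[OF S ps(1), of "e/2"] e by auto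
  have "\<bar>u x - h x\<bar> < e" if "x \<in> K" for x
  proof -
    have "vec_upd l x 0 \<in> S"
      unfolding S_def using that by blast
    then have "\<bar>u (vec_upd l x 0) - g (vec_upd l x 0)\<bar> < e / 2"
      "\<bar>g (vec_upd l x 0) - h (vec_upd l x 0)\<bar> < e / 2"
      using g(2) h(2) ps(2) by auto
    then have "\<bar>u (vec_upd l x 0) - h (vec_upd l x 0)\<bar> < e"
      by linarith
    then show ?thesis
      using u(2) shear_heightsD(1)[OF h(1)] by (simp add: coord_indep_def)
  qed
  with h(1) show ?thesis by blast
qed

lemma shear_heights_dense_family:
  fixes u :: "'i \<Rightarrow> real^'n::finite \<Rightarrow> real"
  assumes K: "compact K" and u: "\<And>k. continuous_on UNIV (u k)" "\<And>k. coord_indep l (u k)"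
    and e: "e > 0"
  shows "\<exists>W. \<forall>k. W k \<in> shear_heights l \<and> (\<forall>x\<in>K. \<bar>u k x - W k x\<bar> < e)"
proof -
  have "\<forall>k. \<exists>h. h \<in> shear_heights l \<and> (\<forall>x\<in>K. \<bar>u k x - h x\<bar> < e)"
    using shear_heights_dense[OF K u e] by blast
  then show ?thesis
    by (rule choice)
qed

subsection \<open>Soft steps and staircases\<close>

definition lrelu_at :: "'n \<Rightarrow> (real^'n::finite \<Rightarrow> real) \<Rightarrow> real \<Rightarrow> real^'n \<Rightarrow> real^'n" where
  "lrelu_at l b \<beta> x = vec_upd l x (lrelu \<beta> (x$l - b x) + b x)"

lemma NN_realizable_lrelu_at:
  assumes b: "b \<in> shear_heights l"
  shows "NN_realizable (lrelu_at l b \<beta>)"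
proof -
  have eq: "lrelu_at l b \<beta> = (\<lambda>x. shear l b (vec_upd l (shear l (\<lambda>x. (-1) * b x) x)
          (lrelu \<beta> (shear l (\<lambda>x. (-1) * b x) x $ l))))"
    using shear_heightsD(1)[OF b] by (simp add: fun_eq_iff lrelu_at_def shear_def coord_indep_def)
  show ?thesis
    unfolding eq
    using NN_realizable_compose[OF NN_realizable_compose[OF
        shear_heightsD(3)[OF shear_heights_scale[OF b]] NN_realizable_lrelu_component]
        shear_heightsD(3)[OF b]] .
qed

text \<open>With \<open>\<eta> = w / (s - 1)\<close>, the leaky ReLUs of slope \<open>s\<close> kinked at \<open>t + \<eta>\<close> and of slope \<open>1/s\<close>
  kinked at \<open>t - w\<close> compose to \<open>u \<mapsto> u - w\<close> below \<open>t\<close> and to the identity above \<open>t + \<eta>\<close>; the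
  final shear by \<open>w\<close> turns this into a ramp of height \<open>w\<close> on \<open>[t, t + \<eta>]\<close>.\<close>

definition soft_step :: "'n \<Rightarrow> real \<Rightarrow> (real^'n::finite \<Rightarrow> real) \<Rightarrow> real \<Rightarrow> real^'n \<Rightarrow> real^'n" where
  "soft_step l t w s x =
     shear l w (lrelu_at l (\<lambda>z. t - w z) (1/s) (lrelu_at l (\<lambda>z. t + w z / (s - 1)) s x))"

lemma NN_realizable_soft_step:
  assumes "w \<in> shear_heights l"
  shows "NN_realizable (soft_step l t w s)"
proof -
  have "(\<lambda>z. t + w z / (s - 1)) \<in> shear_heights l" "(\<lambda>z. t - w z) \<in> shear_heights l"
    using shear_heights_scale[OF assms, of "1 / (s - 1)"]
    by (auto intro!: shear_heights_add shear_heights_diff shear_heights_const assms)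
  then show ?thesis
    unfolding soft_step_def[abs_def]
    using NN_realizable_compose[OF NN_realizable_compose[OF NN_realizable_lrelu_at
        NN_realizable_lrelu_at] shear_heightsD(3)[OF assms]] by blast
qed

lemma lrelu_soft_step:
  fixes s \<eta> t u :: real
  assumes s: "s > 1" and \<eta>: "\<eta> > 0"
  shows "lrelu (1/s) (lrelu s (u - (t + \<eta>)) + (t + \<eta>) - (t - (s - 1) * \<eta>)) + (t - (s - 1) * \<eta>)
           + (s - 1) * \<eta>
         = u + (s - 1) * \<eta> * clamp01 ((u - t) / \<eta>)"
proof -
  have below: "lrelu s (u - (t + \<eta>)) + (t + \<eta>) - (t - (s - 1) * \<eta>) = s * (u - t)" if "u < t + \<eta>"
    using that by (simp add: lrelu_def algebra_simps)
  consider "t + \<eta> \<le> u" | "t \<le> u" "u < t + \<eta>" | "u < t"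
    by linarith
  then show ?thesis
  proof cases
    case 1
    moreover have "0 \<le> (s - 1) * \<eta>"
      using s \<eta> by simp
    ultimately have "lrelu s (u - (t + \<eta>)) + (t + \<eta>) - (t - (s - 1) * \<eta>) = u + (s - 1) * \<eta> - t"
      "0 \<le> u + (s - 1) * \<eta> - t"
      using \<eta> by auto
    moreover have "clamp01 ((u - t) / \<eta>) = 1"
      using 1 \<eta> by (simp add: clamp01_ge1 field_simps)
    ultimately show ?thesis
      by simp
  next
    case 2
    then have "clamp01 ((u - t) / \<eta>) = (u - t) / \<eta>"
      using \<eta> by (simp add: clamp01_def field_simps)
    then have "(s - 1) * \<eta> * clamp01 ((u - t) / \<eta>) = (s - 1) * (u - t)"
      using \<eta> by simp
    moreover have "lrelu (1/s) (s * (u - t)) = s * (u - t)"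
      using 2 s by simp
    ultimately show ?thesis
      unfolding below[OF \<open>u < t + \<eta>\<close>] by (simp add: algebra_simps)
  next
    case 3
    then have "s * (u - t) < 0"
      using s by (simp add: mult_pos_neg)
    then have "lrelu (1/s) (s * (u - t)) = u - t"
      using s by (simp add: lrelu_def)
    moreover have "clamp01 ((u - t) / \<eta>) = 0"
      using 3 \<eta> by (simp add: clamp01_le0 divide_nonpos_pos)
    moreover have "u < t + \<eta>"
      using 3 \<eta> by simp
    ultimately show ?thesis
      unfolding below[OF \<open>u < t + \<eta>\<close>] by simp
  qed
qed

lemma soft_step_apply:
  assumes w: "coord_indep l w" and s: "s > 1" and wx: "w x > 0"
  shows "soft_step l t w s x = vec_upd l x (x$l + w x * clamp01 ((x$l - t) / (w x / (s - 1))))"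
proof -
  have wy: "w (vec_upd l y v) = w y" for y v
    using w by (simp add: coord_indep_def)
  have \<eta>: "w x / (s - 1) > 0" and "(s - 1) * (w x / (s - 1)) = w x"
    using s wx by simp_all
  note step = lrelu_soft_step[OF s \<eta>, of "x$l" t, unfolded this]
  have "soft_step l t w s x = vec_upd l x (lrelu (1/s) (lrelu s (x$l - (t + w x / (s - 1)))
      + (t + w x / (s - 1)) - (t - w x)) + (t - w x) + w x)"
    by (simp add: soft_step_def shear_def lrelu_at_def wy)
  also have "\<dots> = vec_upd l x (x$l + w x * clamp01 ((x$l - t) / (w x / (s - 1))))"
    by (simp only: step)
  finally show ?thesis .
qed

text \<open>The highest step is applied first, so each lower step acts on an argument that is
  unchanged wherever that step is not already saturated.\<close>

primrec staircase :: "'n \<Rightarrow> (nat \<Rightarrow> real) \<Rightarrow> (nat \<Rightarrow> real^'n \<Rightarrow> real) \<Rightarrow> real \<Rightarrow> nat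
    \<Rightarrow> real^'n \<Rightarrow> real^'n::finite" where
  "staircase l p w s 0 = (\<lambda>x. x)"
| "staircase l p w s (Suc n) = (\<lambda>x. staircase l p w s n (soft_step l (p n) (w n) s x))"

lemma NN_realizable_staircase:
  assumes "\<And>k. w k \<in> shear_heights l"
  shows "NN_realizable (staircase l p w s n)"
  by (induction n) (simp_all add: NN_realizable_id NN_realizable_compose NN_realizable_soft_step assms)

lemma staircase_nth: "i \<noteq> l \<Longrightarrow> staircase l p w s n x $ i = x $ i"
  by (induction n arbitrary: x) (simp_all add: soft_step_def shear_def lrelu_at_def)

lemma staircase_apply:
  fixes p0 D :: real
  assumes w: "\<And>k. coord_indep l (w k)" and s: "s > 1"
    and pos: "\<And>k. k < n \<Longrightarrow> 0 < w k x \<and> w k x / (s - 1) \<le> D"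
  shows "staircase l (\<lambda>k. p0 + k * D) w s n (vec_upd l x u)
       = vec_upd l x (u + (\<Sum>k<n. w k x * clamp01 ((u - (p0 + k * D)) / (w k x / (s - 1)))))"
  using pos
proof (induction n arbitrary: u)
  case (Suc n)
  define step where "step k v = w k x * clamp01 ((v - (p0 + k * D)) / (w k x / (s - 1)))"
    for k :: nat and v :: real
  have wx: "w k (vec_upd l x v) = w k x" for k v
    using w by (simp add: coord_indep_def)
  have \<eta>: "0 < w n x / (s - 1)" "w n x / (s - 1) \<le> D"
    using Suc.prems[of n] s by auto
  have "soft_step l (p0 + n * D) (w n) s (vec_upd l x u) = vec_upd l x (u + step n u)"
    using Suc.prems[of n] by (simp add: soft_step_apply w s wx step_def)
  moreover have "(\<Sum>k<n. step k (u + step n u)) = (\<Sum>k<n. step k u)"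
  proof (cases "u \<le> p0 + n * D")
    case True
    then have "(u - (p0 + n * D)) / (w n x / (s - 1)) \<le> 0"
      using \<eta> by (intro divide_nonpos_pos) auto
    then have "step n u = 0"
      unfolding step_def using clamp01_le0 by simp
    then show ?thesis by simp
  next
    case False
    have "step n u \<ge> 0"
      using Suc.prems[of n] by (simp add: step_def clamp01_nonneg)
    moreover have "p0 + k * D + w k x / (s - 1) \<le> u" if "k < n" for k
    proof -
      have "Suc k * D \<le> n * D"
        using \<eta> that by (intro mult_right_mono) auto
      then show ?thesis
        using Suc.prems[of k] that False by (simp add: algebra_simps)
    qed
    then have "step k v = w k x" if "k < n" "u \<le> v" for k v
    proof -
      have \<eta>k: "0 < w k x / (s - 1)"
        using Suc.prems[of k] that s by simp
      have "1 \<le> (v - (p0 + k * D)) / (w k x / (s - 1))"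
        using \<open>k < n \<Longrightarrow> _\<close>[OF that(1)] that(2)
        by (subst le_divide_eq_1_pos[OF \<eta>k]) linarith
      then show ?thesis
        unfolding step_def using clamp01_ge1 by simp
    qed
    with \<open>step n u \<ge> 0\<close> show ?thesis by simp
  qed
  ultimately show ?case
    using Suc by (simp add: step_def add.assoc)
qed simp

subsection \<open>Approximating monotone coordinate updates\<close>

lemma mult_between_0_1_bounds:
  fixes w \<theta> :: real
  assumes "0 \<le> \<theta>" "\<theta> \<le> 1"
  shows "min 0 w \<le> w * \<theta>" "w * \<theta> \<le> max 0 w"
proof -
  have "w * \<theta> \<le> w" if "0 \<le> w" using that assms by (simp add: mult_left_le)
  moreover have "w \<le> w * \<theta>" if "w < 0" using that assms by (simp add: mult_le_cancel_left1)
  ultimately show "min 0 w \<le> w * \<theta>" "w * \<theta> \<le> max 0 w"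
    using assms by (auto simp: min_def max_def mult_nonpos_nonneg)
qed

lemma staircase_error:
  fixes F W :: "nat \<Rightarrow> real" and j N :: nat and \<gamma> :: real
  assumes j: "j < N" and \<phi>: "F j \<le> \<phi>" "\<phi> \<le> F (Suc j)" and \<theta>: "0 \<le> \<theta>" "\<theta> \<le> 1"
    and W: "\<And>k. k < N \<Longrightarrow> \<bar>W k - (F (Suc k) - F k)\<bar> \<le> \<gamma>" and V: "\<bar>V - F 0\<bar> \<le> \<gamma>"
  shows "\<bar>\<phi> - (V + (\<Sum>k<j. W k) + W j * \<theta>)\<bar> \<le> F (Suc j) - F j + (N + 1) * \<gamma>"
proof -
  have "\<bar>(\<Sum>k<j. W k) - (F j - F 0)\<bar> = \<bar>\<Sum>k<j. W k - (F (Suc k) - F k)\<bar>"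
    using sum_lessThan_telescope[of F j] by (simp add: sum_subtractf)
  also have "\<dots> \<le> (\<Sum>k<j. \<gamma>)"
    using W j by (intro order.trans[OF sum_abs] sum_mono) auto
  finally have sum: "\<bar>(\<Sum>k<j. W k) - (F j - F 0)\<bar> \<le> j * \<gamma>" by simp
  have "(j + 2) * \<gamma> \<le> (N + 1) * \<gamma>"
    using j V by (intro mult_right_mono) auto
  then have "j * \<gamma> + 2 * \<gamma> \<le> (N + 1) * \<gamma>"
    by (simp add: algebra_simps)
  moreover have "- \<gamma> \<le> W j * \<theta>" "W j * \<theta> \<le> F (Suc j) - F j + \<gamma>"
    using mult_between_0_1_bounds[OF \<theta>, of "W j"] W[OF j] \<phi> by (auto simp: abs_le_iff)
  ultimately show ?thesis
    using \<phi> sum V by (simp add: abs_le_iff)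
qed

lemma shear_staircase_error:
  fixes F :: "nat \<Rightarrow> real" and p0 D u \<gamma> :: real and j N :: nat
  assumes W: "\<And>k. coord_indep l (W k)" and V: "coord_indep l V" and s: "s > 1"
    and pos: "\<And>k. k < N \<Longrightarrow> 0 < W k x \<and> W k x / (s - 1) \<le> D"
    and j: "j < N" "p0 + j * D \<le> u" "u \<le> p0 + Suc j * D"
    and \<phi>: "F j \<le> \<phi>" "\<phi> \<le> F (Suc j)"
    and Wx: "\<And>k. k < N \<Longrightarrow> \<bar>W k x - (F (Suc k) - F k)\<bar> \<le> \<gamma>" and Vx: "\<bar>V x - F 0\<bar> \<le> \<gamma>"
  shows "\<bar>\<phi> - shear l V (staircase l (\<lambda>k. p0 + k * D) W s N (vec_upd l x u)) $ l\<bar>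
       \<le> \<bar>u\<bar> + (F (Suc j) - F j) + (N + 1) * \<gamma>"
proof -
  define \<theta> where "\<theta> = clamp01 ((u - (p0 + j * D)) / (W j x / (s - 1)))"
  have sum: "(\<Sum>k<N. W k x * clamp01 ((u - (p0 + k * D)) / (W k x / (s - 1))))
      = (\<Sum>k<j. W k x) + W j x * \<theta>"
    unfolding \<theta>_def using pos s j by (intro sum_clamp01_grid) auto
  have "V (vec_upd l x v) = V x" for v
    using V by (simp add: coord_indep_def)
  moreover have "staircase l (\<lambda>k. p0 + k * D) W s N (vec_upd l x u)
      = vec_upd l x (u + (\<Sum>k<N. W k x * clamp01 ((u - (p0 + k * D)) / (W k x / (s - 1)))))"
    using pos by (rule staircase_apply[OF W s])
  ultimately have "shear l V (staircase l (\<lambda>k. p0 + k * D) W s N (vec_upd l x u)) $ l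
      = u + (V x + (\<Sum>k<j. W k x) + W j x * \<theta>)"
    unfolding sum by (simp add: shear_def algebra_simps)
  moreover have "\<bar>\<phi> - (V x + (\<Sum>k<j. W k x) + W j x * \<theta>)\<bar> \<le> F (Suc j) - F j + (N + 1) * \<gamma>"
    by (rule staircase_error[OF j(1) \<phi>]) (simp_all add: \<theta>_def clamp01_nonneg clamp01_le1 Wx Vx)
  ultimately show ?thesis
    using abs_ge_self[of u] abs_ge_minus_self[of u] by (simp add: abs_le_iff)
qed

lemma small_grid_increments:
  fixes f :: "real^'n::finite \<Rightarrow> real"
  assumes K: "compact K" and f: "continuous_on UNIV f" and R: "R > 0" and e: "e > 0"
  shows "\<exists>N::nat>0. \<forall>x\<in>K. \<forall>k<N.
    \<bar>f (vec_upd l x (- R + Suc k * (2 * R / N))) - f (vec_upd l x (- R + k * (2 * R / N)))\<bar> < e"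
proof -
  have "continuous_on (K \<times> {-R..R}) (\<lambda>z. f (vec_upd l (fst z) (snd z)))"
    by (rule continuous_on_compose2[OF f continuous_on_vec_upd[OF continuous_on_fst continuous_on_snd]])
      auto
  then obtain N :: nat where N: "N > 0" and modulus: "\<forall>x\<in>K. \<forall>s\<in>{-R..R}. \<forall>t\<in>{-R..R}.
      \<bar>s - t\<bar> \<le> (R - - R) / N \<longrightarrow> \<bar>f (vec_upd l x s) - f (vec_upd l x t)\<bar> < e"
    using uniform_grid[OF K _ e, of "-R" R "\<lambda>x t. f (vec_upd l x t)"] by (auto simp: case_prod_beta)
  have grid: "- R + k * (2 * R / N) \<in> {-R..R}" if "k \<le> N" for k :: nat
  proof -
    have "k * (2 * R / N) \<le> N * (2 * R / N)"
      using that R by (intro mult_right_mono) auto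
    then show ?thesis using R N by auto
  qed
  have "(- R + Suc k * d) - (- R + k * d) = d" for k :: nat and d :: real
    by (simp add: algebra_simps)
  then have step: "\<bar>(- R + Suc k * (2 * R / N)) - (- R + k * (2 * R / N))\<bar> \<le> (R - - R) / N"
    for k :: nat
    using R by (simp only:) simp
  show ?thesis
  proof (intro exI[of _ N] conjI N ballI allI impI)
    fix x k
    assume "x \<in> K" "k < N"
    then show "\<bar>f (vec_upd l x (- R + Suc k * (2 * R / N))) - f (vec_upd l x (- R + k * (2 * R / N)))\<bar> < e"
      using grid[of k] grid[of "Suc k"] step[of k] by (intro modulus[rule_format]) auto
  qed
qed

lemma staircase_heights:
  fixes F :: "real^'n::finite \<Rightarrow> nat \<Rightarrow> real"
  assumes K: "compact K" and F: "\<And>k. continuous_on UNIV (\<lambda>x. F x k)" "\<And>k. coord_indep l (\<lambda>x. F x k)"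
    and \<gamma>: "\<gamma> > 0"
  shows "\<exists>W V. (\<forall>k. W k \<in> shear_heights l) \<and> V \<in> shear_heights l
    \<and> (\<forall>k. \<forall>x\<in>K. F x (Suc k) - F x k < W k x \<and> W k x < F x (Suc k) - F x k + \<gamma>)
    \<and> (\<forall>x\<in>K. \<bar>V x - F x 0\<bar> \<le> \<gamma>)"
proof -
  obtain W where W: "\<forall>k. W k \<in> shear_heights l
      \<and> (\<forall>x\<in>K. \<bar>(F x (Suc k) - F x k + \<gamma> / 2) - W k x\<bar> < \<gamma> / 2)"
    using F \<gamma>
    by (atomize_elim, intro shear_heights_dense_family K continuous_on_add continuous_on_diff
        continuous_on_const) (auto simp: coord_indep_def)
  obtain V where V: "V \<in> shear_heights l" "\<forall>x\<in>K. \<bar>F x 0 - V x\<bar> < \<gamma>"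
    using shear_heights_dense[OF K F \<gamma>] by blast
  have "F x (Suc k) - F x k < W k x \<and> W k x < F x (Suc k) - F x k + \<gamma>" if "x \<in> K" for k x
  proof -
    have "\<bar>(F x (Suc k) - F x k + \<gamma> / 2) - W k x\<bar> < \<gamma> / 2"
      using W that by blast
    then show ?thesis
      unfolding abs_less_iff by (intro conjI; linarith)
  qed
  moreover have "\<bar>V x - F x 0\<bar> \<le> \<gamma>" if "x \<in> K" for x
    using V(2) that by (fastforce simp: abs_minus_commute)
  ultimately show ?thesis
    using W V(1) by blast
qed

text \<open>The staircase adds its steps to coordinate \<open>l\<close> itself, so this coordinate is first
  shrunk by the factor \<open>c\<close>, making its own contribution at most \<open>e/8\<close>; the slope \<open>s\<close> makes
  all ramps narrower than the rescaled grid spacing \<open>D\<close>.\<close>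

lemma monotone_vec_upd_approx:
  fixes f :: "real^'n::finite \<Rightarrow> real"
  assumes K: "compact K" and f: "continuous_on UNIV f"
    and mono: "\<And>x s t. s \<le> t \<Longrightarrow> f (vec_upd l x s) \<le> f (vec_upd l x t)" and e: "e > 0"
  shows "\<exists>g. NN_realizable g \<and> (\<forall>x\<in>K. \<forall>i. \<bar>vec_upd l x (f x) $ i - g x $ i\<bar> < e)"
proof -
  obtain C where C: "\<And>x i. x \<in> K \<Longrightarrow> \<bar>x$i\<bar> \<le> C"
    using bounded_components[OF compact_imp_bounded[OF K]] by meson
  define R where "R = \<bar>C\<bar> + 1"
  have R: "R > 0" "\<And>x. x \<in> K \<Longrightarrow> - R \<le> x$l \<and> x$l \<le> R"
    using C[of _ l] abs_ge_self[of C] by (simp_all add: R_def abs_le_iff) fastforce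
  obtain N :: nat where N: "N > 0" and small: "\<forall>x\<in>K. \<forall>k<N.
      \<bar>f (vec_upd l x (- R + Suc k * (2 * R / N))) - f (vec_upd l x (- R + k * (2 * R / N)))\<bar> < e / 8"
    using small_grid_increments[OF K f R(1), of "e / 8" l] e by (auto elim!: exE)
  define \<Delta> where "\<Delta> = 2 * R / N"
  have \<Delta>: "\<Delta> > 0" "- R + N * \<Delta> = R"
    using R N by (simp_all add: \<Delta>_def)
  define F where "F x k = f (vec_upd l x (- R + k * \<Delta>))" for x and k :: nat
  define w where "w k x = F x (Suc k) - F x k" for k x
  have w: "0 \<le> w k x" for k x
    using mono \<Delta> by (simp add: w_def F_def algebra_simps)
  have w_small: "w k x < e / 8" if "x \<in> K" "k < N" for k x
    unfolding w_def F_def \<Delta>_def using small[rule_format, OF that] by (simp only: abs_less_iff)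
  have F_indep: "coord_indep l (\<lambda>x. F x k)" for k
    by (simp add: coord_indep_def F_def)
  have F_cont: "continuous_on UNIV (\<lambda>x. F x k)" for k
    unfolding F_def
    by (rule continuous_on_compose2[OF f continuous_on_vec_upd[OF continuous_on_id continuous_on_const]])
      auto
  define \<gamma> where "\<gamma> = e / (8 * (N + 2))"
  have \<gamma>: "\<gamma> > 0" "\<gamma> \<le> e / 8" "(N + 1) * \<gamma> < e / 8"
    using e by (simp_all add: \<gamma>_def field_simps)
  obtain W V where W: "\<And>k. W k \<in> shear_heights l" and V: "V \<in> shear_heights l"
    and W_bounds: "\<And>k x. x \<in> K \<Longrightarrow> w k x < W k x \<and> W k x < w k x + \<gamma>"
    and V_approx: "\<And>x. x \<in> K \<Longrightarrow> \<bar>V x - F x 0\<bar> \<le> \<gamma>"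
    using staircase_heights[of K F, OF K F_cont F_indep \<gamma>(1)] unfolding w_def by blast
  define c where "c = e / (8 * R)"
  define D where "D = c * \<Delta>"
  define s where "s = 2 + e / (4 * D)"
  have cD: "c > 0" "D > 0"
    using e R \<Delta> by (simp_all add: c_def D_def)
  then have "e / (4 * D) > 0"
    using e by simp
  then have s: "s > 1" "(s - 1) * D = D + e / 4"
    using cD(2) by (simp_all add: s_def algebra_simps)
  define net where "net x = shear l V (staircase l (\<lambda>k. - c * R + k * D) W s N (vec_upd l x (c * x$l)))"
    for x
  have "NN_realizable net"
    unfolding net_def[abs_def]
    using NN_realizable_compose[OF NN_realizable_compose[OF NN_realizable_vec_upd_affine
        NN_realizable_staircase[OF W]] shear_heightsD(3)[OF V]]
    by (simp add: affine_fun_intros)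
  moreover have "\<bar>f x - net x $ l\<bar> < e" if x: "x \<in> K" for x
  proof -
    have "W k x \<le> D * (s - 1)" if "k < N" for k
      using W_bounds[OF x, of k] w_small[OF x that] cD(2) \<gamma>(2) s(2) by (simp add: algebra_simps)
    then have pos: "0 < W k x \<and> W k x / (s - 1) \<le> D" if "k < N" for k
      using W_bounds[OF x, of k] w[of k x] s that by (simp add: pos_divide_le_eq)
    obtain j where j: "j < N" "- R + j * \<Delta> \<le> x$l" "x$l \<le> - R + Suc j * \<Delta>"
      using obtain_grid_cell[OF \<Delta>(1) N, of "- R" "x$l"] R(2)[OF x] \<Delta>(2) by auto
    then have cell: "- c * R + j * D \<le> c * x$l" "c * x$l \<le> - c * R + Suc j * D"
      using mult_left_mono[OF j(2), of c] mult_left_mono[OF j(3), of c] cD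
      by (simp_all add: D_def algebra_simps)
    have "F x j \<le> f x" "f x \<le> F x (Suc j)"
      using mono[of _ "x$l" x] mono[of "x$l" _ x] j(2,3) by (simp_all add: F_def)
    moreover have "\<bar>W k x - (F x (Suc k) - F x k)\<bar> \<le> \<gamma>" for k
      using W_bounds[OF x, of k] by (simp add: w_def abs_le_iff)
    moreover note V_approx[OF x]
    ultimately have "\<bar>f x - net x $ l\<bar> \<le> \<bar>c * x$l\<bar> + w j x + (N + 1) * \<gamma>"
      unfolding net_def w_def
      by (intro shear_staircase_error[OF shear_heightsD(1)[OF W] shear_heightsD(1)[OF V] s(1) pos
          j(1) cell])
    moreover have "\<bar>c * x$l\<bar> \<le> c * R"
      using R(2)[OF x] cD(1) by (simp add: abs_mult abs_le_iff)
    moreover have "c * R = e / 8"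
      using R(1) by (simp add: c_def)
    ultimately show ?thesis
      using w_small[OF x j(1)] \<gamma>(3) by linarith
  qed
  moreover have "net x $ i = x $ i" if "i \<noteq> l" for x i
    using that by (simp add: net_def shear_def staircase_nth)
  ultimately show ?thesis
    using e by (intro exI[of _ net]) auto
qed

subsection \<open>The last coordinate of a map in \<open>S_inf_c\<close>\<close>

lemma continuous_inj_eventually_id_mono:
  fixes g :: "real \<Rightarrow> real"
  assumes cont: "continuous_on UNIV g" and inj: "inj g" and id: "\<And>r. \<bar>r\<bar> > B \<Longrightarrow> g r = r"
    and "s \<le> t"
  shows "g s \<le> g t"
proof (cases "s = t")
  case False
  with \<open>s \<le> t\<close> have st: "s < t" by simp
  define T where "T = max B (max \<bar>s\<bar> \<bar>t\<bar>) + 1"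
  have T: "g (- T) = - T" "g T = T" "- T < s" "t < T"
    using id[of T] id[of "- T"] by (auto simp: T_def)
  have mono: "(g a < g x \<and> g x < g b) \<or> (g b < g x \<and> g x < g a)" if "a < x" "x < b" for a x b
    using continuous_inj_imp_mono[OF that continuous_on_subset[OF cont] inj_on_subset[OF inj]] by simp
  have "g s < g T"
    using mono[of "- T" s T] T st by auto
  then have "g s < g t"
    using mono[of s t T] T st by auto
  then show ?thesis by simp
qed simp

lemma S_inf_c_last_coordinate:
  fixes \<tau> :: "real^'n::{finite,linorder} \<Rightarrow> real^'n::{finite,linorder}"
  assumes "\<tau> \<in> S_inf_c"
  obtains f where "continuous_on UNIV f" "\<And>x. \<tau> x = vec_upd (Max UNIV) x (f x)"
    "\<And>x s t. s \<le> t \<Longrightarrow> f (vec_upd (Max UNIV) x s) \<le> f (vec_upd (Max UNIV) x t)"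
proof -
  obtain f where f: "continuous_on UNIV f"
    and \<tau>: "\<And>x. \<tau> x = vec_upd (Max UNIV) x (f x)"
    using assms unfolding S_inf_c_def vec_upd_def by blast
  obtain Kt where Kt: "compact Kt" "\<And>x. x \<notin> Kt \<Longrightarrow> \<tau> x = x"
    using assms unfolding S_inf_c_def compactly_supported_def by blast
  then obtain B where B: "\<And>z. z \<in> Kt \<Longrightarrow> norm z \<le> B"
    using compact_imp_bounded[OF Kt(1)] unfolding bounded_iff by blast
  have inj: "inj \<tau>"
    using assms unfolding S_inf_c_def smooth_diffeo_def by (blast intro: bij_is_inj)
  have "f (vec_upd (Max UNIV) x s) \<le> f (vec_upd (Max UNIV) x t)" if "s \<le> t" for x s t
  proof (rule continuous_inj_eventually_id_mono[OF _ _ _ that])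
    show "continuous_on UNIV (\<lambda>r. f (vec_upd (Max UNIV) x r))"
      by (rule continuous_on_compose2[OF f continuous_on_vec_upd[OF continuous_on_const
          continuous_on_id]]) auto
    show "inj (\<lambda>r. f (vec_upd (Max UNIV) x r))"
    proof (rule injI)
      fix r r'
      assume "f (vec_upd (Max UNIV) x r) = f (vec_upd (Max UNIV) x r')"
      then have "\<tau> (vec_upd (Max UNIV) x r) = \<tau> (vec_upd (Max UNIV) x r')"
        by (simp add: \<tau>)
      then show "r = r'"
        using inj by (simp add: inj_eq)
    qed
    show "f (vec_upd (Max UNIV) x r) = r" if "\<bar>r\<bar> > B" for r
    proof -
      have "vec_upd (Max UNIV) x r \<notin> Kt"
        using B component_le_norm_cart[of "vec_upd (Max UNIV) x r" "Max UNIV"] that by force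
      then show ?thesis
        using Kt(2) \<tau> by (metis vec_upd_eq_iff vec_upd_upd)
    qed
  qed
  with f \<tau> show ?thesis using that by blast
qed

theorem mainTheorem3:
  fixes \<tau> :: "real^'n::{finite,linorder} \<Rightarrow> real^'n::{finite,linorder}" and K :: "(real^'n::{finite,linorder}) set" and \<epsilon> :: real
  assumes "\<tau> \<in> S_inf_c" and "compact K" and "\<epsilon> > 0"
  shows "\<exists>g\<in>NN_LReLU. \<exists>\<delta> < \<epsilon>. \<forall>x\<in>K. \<forall>i. \<bar>\<tau> x $ i - g x $ i\<bar> \<le> \<delta>"
proof -
  obtain f where f: "continuous_on UNIV f" and \<tau>: "\<And>x. \<tau> x = vec_upd (Max UNIV) x (f x)"
    and mono: "\<And>x s t. s \<le> t \<Longrightarrow> f (vec_upd (Max UNIV) x s) \<le> f (vec_upd (Max UNIV) x t)"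
    using S_inf_c_last_coordinate[OF assms(1)] by metis
  obtain g where g: "NN_realizable g" "\<forall>x\<in>K. \<forall>i. \<bar>\<tau> x $ i - g x $ i\<bar> < \<epsilon> / 2"
    using monotone_vec_upd_approx[OF assms(2) f mono, of "\<epsilon> / 2"] assms(3) by (auto simp: \<tau>)
  then obtain h where h: "h \<in> NN_LReLU" "\<forall>x\<in>K. h x = g x"
    using assms(2) unfolding NN_realizable_def by blast
  have "\<bar>\<tau> x $ i - h x $ i\<bar> \<le> \<epsilon> / 2" if "x \<in> K" for x i
    using less_imp_le[OF g(2)[rule_format, OF that, of i]] h(2) that by simp
  with h(1) assms(3) show ?thesis
    by (intro bexI[of _ h] exI[of _ "\<epsilon> / 2"]) auto
qed

end
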